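(* Let $k$ and $d$ be positive integers with $k\geq 2d$, and let $G^d_k$ be the circular clique graph. Then $\chi(G^d_k)\geq box(G^d_k)$.
   Context: The circular clique $G^d_k$ (for positive integers $k\ge 2d$) is the simple graph with vertex set $\{a_j : 0\leq j\leq k-1\}$ in which $a_ia_j$ is an edge if and only if $d\leq |i-j|\leq k-d$. $\chi(G)$ denotes the chromatic number. An $\ell$-box is a Cartesian product $[x_1,y_1]\times\cdots\times[x_\ell,y_\ell]$ of $\ell$ closed bounded real intervals; the boxicity $box(G)$ of a graph $G$ is the least positive integer $\ell$ such that $G$ is isomorphic to the intersection graph of a family of $\ell$-boxes (vertices are boxes, adjacent iff the boxes intersect). *)

theory Defs
  imports Complex_Main
begin

text \<open>A simple graph is given by a vertex set V and a symmetric irreflexive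
adjacency relation E (only its restriction to V matters).\<close>

text \<open>Circular clique G^d_k: vertices a_0,...,a_{k-1}, represented by the naturals
0..k-1; a_i a_j is an edge iff d \<le> |i - j| \<le> k - d.\<close>
definition circ_clique_adj :: "nat \<Rightarrow> nat \<Rightarrow> nat \<Rightarrow> nat \<Rightarrow> bool" where
  "circ_clique_adj k d i j \<longleftrightarrow>
     i < k \<and> j < k \<and> int d \<le> \<bar>int i - int j\<bar> \<and> \<bar>int i - int j\<bar> \<le> int k - int d"

definition circ_clique_vertices :: "nat \<Rightarrow> nat set" where
  "circ_clique_vertices k = {..<k}"

definition proper_colouring :: "'a set \<Rightarrow> ('a \<Rightarrow> 'a \<Rightarrow> bool) \<Rightarrow> nat \<Rightarrow> ('a \<Rightarrow> nat) \<Rightarrow> bool" where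
  "proper_colouring V E n c \<longleftrightarrow>
     (\<forall>v\<in>V. c v < n) \<and> (\<forall>u\<in>V. \<forall>v\<in>V. E u v \<longrightarrow> c u \<noteq> c v)"

definition chromatic_number :: "'a set \<Rightarrow> ('a \<Rightarrow> 'a \<Rightarrow> bool) \<Rightarrow> nat" where
  "chromatic_number V E = (LEAST n. \<exists>c. proper_colouring V E n c)"

text \<open>An l-box representation: each vertex v gets the box
  [fst (B v 0), snd (B v 0)] \<times> ... \<times> [fst (B v (l-1)), snd (B v (l-1))]
  (closed bounded nonempty intervals), and distinct vertices are adjacent iff
  their boxes intersect, i.e. the intervals overlap in every coordinate.\<close>
definition box_representation ::
  "'a set \<Rightarrow> ('a \<Rightarrow> 'a \<Rightarrow> bool) \<Rightarrow> nat \<Rightarrow> ('a \<Rightarrow> nat \<Rightarrow> real \<times> real) \<Rightarrow> bool" where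
  "box_representation V E l B \<longleftrightarrow>
     (\<forall>v\<in>V. \<forall>i<l. fst (B v i) \<le> snd (B v i)) \<and>
     (\<forall>u\<in>V. \<forall>v\<in>V. u \<noteq> v \<longrightarrow>
        (E u v \<longleftrightarrow> (\<forall>i<l. fst (B u i) \<le> snd (B v i) \<and> fst (B v i) \<le> snd (B u i))))"

definition boxicity :: "'a set \<Rightarrow> ('a \<Rightarrow> 'a \<Rightarrow> bool) \<Rightarrow> nat" where
  "boxicity V E = (LEAST l. l \<ge> 1 \<and> (\<exists>B. box_representation V E l B))"

end

theory Submission
  imports Defs "HOL-Number_Theory.Cong"
begin

text \<open>An independent set I of G^d_k has at most d vertices: shifting I by d and thickening
the result by k - 2d further steps around the cycle gives a set disjoint from I, and a
Cauchy-Davenport type bound shows that this set has at least |I| + k - 2d elements unless it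
is everything (|A + {0..j}| \<ge> min k (|A| + j) in Z/kZ). Hence k \<le> \<chi> d.

Conversely, whenever k \<le> n d there is a representation by n-boxes. In coordinate t the cycle is
cut at c = min ((t+1) d) k and the vertex at clockwise distance p from c gets the interval
[p, p + k - d], or just the point p if p \<ge> k - d. Adjacent vertices meet in every
coordinate. A non-adjacent pair has a vertex u from which the other one lies less than d steps
clockwise; it is separated in a coordinate whose cut lies among the d positions after u,
and since the windows [c - d, c) cover the cycle such a coordinate exists.\<close>

lemma card_le_colours_mult_independent_bound:
  assumes "finite V" "proper_colouring V E n c"
    and indep: "\<And>I. I \<subseteq> V \<Longrightarrow> \<forall>x\<in>I. \<forall>y\<in>I. \<not> E x y \<Longrightarrow> card I \<le> d"
  shows "card V \<le> n * d"
proof -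
  have "V = (\<Union>i<n. {v\<in>V. c v = i})"
    using assms(2) unfolding proper_colouring_def by auto
  then have "card V \<le> (\<Sum>i<n. card {v\<in>V. c v = i})"
    by (metis card_UN_le finite_lessThan)
  also have "\<dots> \<le> (\<Sum>i<n. d)"
    using assms(2) unfolding proper_colouring_def by (intro sum_mono indep) force+
  finally show ?thesis by simp
qed

lemma proper_colouring_chromatic_number:
  "proper_colouring V E n c \<Longrightarrow> \<exists>c. proper_colouring V E (chromatic_number V E) c"
  unfolding chromatic_number_def by (rule LeastI_ex) blast

lemma boxicity_le: "1 \<le> l \<Longrightarrow> box_representation V E l B \<Longrightarrow> boxicity V E \<le> l"
  unfolding boxicity_def by (rule Least_le) blast

lemma inj_on_add_mod: "inj_on (\<lambda>x. (x + a) mod k) {..<(k::nat)}"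
  by (rule inj_onI) (metis cong_add_rcancel_nat cong_def mod_less lessThan_iff)

definition cyclic_thickening :: "nat \<Rightarrow> nat set \<Rightarrow> nat \<Rightarrow> nat set" where
  "cyclic_thickening k A j = {(x + e) mod k | x e. x \<in> A \<and> e \<le> j}"

lemma Suc_mod_closed_eq_lessThan:
  assumes "C \<subseteq> {..<k}" "x \<in> C" "\<forall>y\<in>C. Suc y mod k \<in> C"
  shows "C = {..<k}"
proof -
  have orbit: "(x + n) mod k \<in> C" for n
    by (induction n) (use assms in \<open>auto simp: mod_Suc_eq\<close>)
  have "y \<in> C" if "y < k" for y
  proof -
    have "y = (x + (y + k - x)) mod k"
      using that assms(1,2) by auto
    with orbit show ?thesis by metis
  qed
  with assms(1) show ?thesis by auto
qed

lemma card_union_Suc_mod_image: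
  assumes "C \<subseteq> {..<k}" "C \<noteq> {}"
  shows "min k (card C + 1) \<le> card (C \<union> (\<lambda>x. Suc x mod k) ` C)"
proof -
  have fin: "finite (C \<union> (\<lambda>x. Suc x mod k) ` C)"
    using assms(1) finite_subset by blast
  show ?thesis
  proof (cases "C = {..<k}")
    case True
    have "C \<subseteq> C \<union> (\<lambda>x. Suc x mod k) ` C" by blast
    from card_mono[OF fin this] True show ?thesis by simp
  next
    case False
    with assms Suc_mod_closed_eq_lessThan obtain x where "x \<in> C" "Suc x mod k \<notin> C"
      by blast
    then have "C \<subset> C \<union> (\<lambda>x. Suc x mod k) ` C" by blast
    with fin have "card C < card (C \<union> (\<lambda>x. Suc x mod k) ` C)"
      by (rule psubset_card_mono)
    then show ?thesis by simp
  qed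
qed

lemma cyclic_thickening_Suc:
  "cyclic_thickening k A j \<union> (\<lambda>x. Suc x mod k) ` cyclic_thickening k A j
     \<subseteq> cyclic_thickening k A (Suc j)"
  unfolding cyclic_thickening_def by (force simp: mod_Suc_eq)

lemma cyclic_thickening_subset: "0 < k \<Longrightarrow> cyclic_thickening k A j \<subseteq> {..<k}"
  unfolding cyclic_thickening_def by auto

lemma card_cyclic_thickening:
  assumes "A \<subseteq> {..<k}" "A \<noteq> {}"
  shows "min k (card A + j) \<le> card (cyclic_thickening k A j)"
proof (induction j)
  case 0
  have "cyclic_thickening k A 0 = A"
    using assms(1) unfolding cyclic_thickening_def by force
  then show ?case by simp
next
  case (Suc j)
  have "0 < k" using assms by auto
  have "cyclic_thickening k A j \<noteq> {}"
    using assms(2) unfolding cyclic_thickening_def by blast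
  then have "min k (card (cyclic_thickening k A j) + 1)
      \<le> card (cyclic_thickening k A j \<union> (\<lambda>x. Suc x mod k) ` cyclic_thickening k A j)"
    by (intro card_union_Suc_mod_image cyclic_thickening_subset \<open>0 < k\<close>)
  also have "\<dots> \<le> card (cyclic_thickening k A (Suc j))"
    by (intro card_mono cyclic_thickening_Suc finite_subset[OF cyclic_thickening_subset]
        finite_lessThan \<open>0 < k\<close>)
  finally show ?case using Suc.IH by linarith
qed

text \<open>For u, v < k this is (v - u) mod k, the clockwise distance from u to v on the cycle;
  cw_dist k c is the rotation moving c to 0, for every c \<le> k.\<close>

definition cw_dist :: "nat \<Rightarrow> nat \<Rightarrow> nat \<Rightarrow> nat" where
  "cw_dist k u v = (if u \<le> v then v - u else v + k - u)"

lemma cw_dist_less: "v < k \<Longrightarrow> cw_dist k u v < k"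
  unfolding cw_dist_def by auto

lemma cw_dist_eq_0_iff: "u < k \<Longrightarrow> v < k \<Longrightarrow> cw_dist k u v = 0 \<longleftrightarrow> u = v"
  unfolding cw_dist_def by auto

lemma cw_dist_add_cw_dist: "u < k \<Longrightarrow> v < k \<Longrightarrow> u \<noteq> v \<Longrightarrow> cw_dist k u v + cw_dist k v u = k"
  unfolding cw_dist_def by auto

lemma cw_dist_add_mod:
  assumes "u < k" "a < k"
  shows "cw_dist k u ((u + a) mod k) = a"
proof (cases "u + a < k")
  case False
  then have "(u + a) mod k = u + a - k"
    using assms by (simp add: le_mod_geq)
  with False assms show ?thesis unfolding cw_dist_def by auto
qed (simp add: cw_dist_def)

lemma cw_dist_rotate:
  "u < k \<Longrightarrow> v < k \<Longrightarrow> c \<le> k \<Longrightarrow> cw_dist k (cw_dist k c u) (cw_dist k c v) = cw_dist k u v"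
  unfolding cw_dist_def by (simp split: if_split; linarith)

lemma circ_clique_adj_iff_cw_dist:
  "u < k \<Longrightarrow> v < k \<Longrightarrow> circ_clique_adj k d u v \<longleftrightarrow> d \<le> cw_dist k u v \<and> d \<le> cw_dist k v u"
  unfolding circ_clique_adj_def cw_dist_def by (cases "u \<le> v") (simp_all add: abs_if; linarith)+

lemma circ_clique_adj_rotate:
  "u < k \<Longrightarrow> v < k \<Longrightarrow> c \<le> k \<Longrightarrow>
    circ_clique_adj k d (cw_dist k c u) (cw_dist k c v) \<longleftrightarrow> circ_clique_adj k d u v"
  by (simp add: circ_clique_adj_iff_cw_dist cw_dist_less cw_dist_rotate)

lemma circ_clique_independent_card_le:
  assumes "I \<subseteq> {..<k}" and indep: "\<forall>x\<in>I. \<forall>y\<in>I. \<not> circ_clique_adj k d x y"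
    and "0 < d" "2 * d \<le> k"
  shows "card I \<le> d"
proof (cases "I = {}")
  case False
  define A where "A = (\<lambda>x. (x + d) mod k) ` I"
  define T where "T = cyclic_thickening k A (k - 2 * d)"
  have "0 < k" using assms by linarith
  have "card A = card I"
    unfolding A_def using card_image inj_on_subset[OF inj_on_add_mod assms(1)] by blast
  moreover have "A \<subseteq> {..<k}" "A \<noteq> {}"
    using \<open>0 < k\<close> False unfolding A_def by auto
  ultimately have T_card: "min k (card I + (k - 2 * d)) \<le> card T"
    unfolding T_def using card_cyclic_thickening by metis
  have "T \<inter> I = {}"
  proof (rule ccontr)
    assume "T \<inter> I \<noteq> {}"
    then obtain x e where x: "x \<in> I" "e \<le> k - 2 * d" and z: "(x + (d + e)) mod k \<in> I"
      unfolding T_def A_def cyclic_thickening_def by (auto simp: mod_add_left_eq add.assoc)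
    let ?z = "(x + (d + e)) mod k"
    have "x < k" using x assms(1) by auto
    have "d + e < k" using x assms by linarith
    with \<open>x < k\<close> have "cw_dist k x ?z = d + e"
      by (rule cw_dist_add_mod)
    moreover have "?z < k"
      using \<open>0 < k\<close> by simp
    moreover have "?z \<noteq> x"
      using calculation cw_dist_eq_0_iff[OF \<open>x < k\<close> \<open>x < k\<close>] \<open>0 < d\<close> by auto
    ultimately have "cw_dist k ?z x = k - (d + e)"
      using cw_dist_add_cw_dist[of x k ?z] \<open>x < k\<close> by auto
    with \<open>cw_dist k x ?z = d + e\<close> have "circ_clique_adj k d x ?z"
      using circ_clique_adj_iff_cw_dist \<open>x < k\<close> \<open>?z < k\<close> x(2) assms(4) by auto
    with indep x z show False by blast
  qed
  then have "card T + card I \<le> k"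
    using cyclic_thickening_subset[OF \<open>0 < k\<close>] assms(1)
    by (metis T_def card_Un_disjoint card_lessThan card_mono finite_lessThan finite_subset
        le_sup_iff)
  moreover have "0 < card I"
    using False assms(1) by (simp add: card_gt_0_iff finite_subset)
  ultimately show ?thesis using T_card by linarith
qed simp

lemma circ_clique_card_le_chromatic_number_mult:
  assumes "0 < d" "2 * d \<le> k"
  shows "k \<le> chromatic_number (circ_clique_vertices k) (circ_clique_adj k d) * d"
proof -
  have "proper_colouring {..<k} (circ_clique_adj k d) k id"
    using assms(1) unfolding proper_colouring_def circ_clique_adj_def by auto
  then obtain c where
    "proper_colouring {..<k} (circ_clique_adj k d) (chromatic_number {..<k} (circ_clique_adj k d)) c"
    using proper_colouring_chromatic_number by blast
  then show ?thesis
    using card_le_colours_mult_independent_bound circ_clique_independent_card_le assms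
    unfolding circ_clique_vertices_def by (metis card_lessThan finite_lessThan)
qed

definition intervals_meet :: "real \<times> real \<Rightarrow> real \<times> real \<Rightarrow> bool" where
  "intervals_meet I J \<longleftrightarrow> fst I \<le> snd J \<and> fst J \<le> snd I"

lemma intervals_meet_commute: "intervals_meet I J \<longleftrightarrow> intervals_meet J I"
  unfolding intervals_meet_def by auto

definition circ_clique_interval :: "nat \<Rightarrow> nat \<Rightarrow> nat \<Rightarrow> real \<times> real" where
  "circ_clique_interval k d p = (real p, real (if p + d < k then p + (k - d) else p))"

lemma circ_clique_interval_meet:
  assumes "p < k" "q < k" "circ_clique_adj k d p q"
  shows "intervals_meet (circ_clique_interval k d p) (circ_clique_interval k d q)"
  using assms unfolding circ_clique_adj_iff_cw_dist[OF assms(1,2)]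
  unfolding intervals_meet_def circ_clique_interval_def cw_dist_def
  by (cases "p \<le> q") auto

lemma circ_clique_interval_disjoint:
  assumes "p < k" "q < k" "k - d \<le> p" "0 < cw_dist k p q" "cw_dist k p q < d"
  shows "\<not> intervals_meet (circ_clique_interval k d p) (circ_clique_interval k d q)"
  using assms unfolding intervals_meet_def circ_clique_interval_def cw_dist_def
  by (cases "p \<le> q") auto

definition circ_clique_boxes :: "nat \<Rightarrow> nat \<Rightarrow> nat \<Rightarrow> nat \<Rightarrow> real \<times> real" where
  "circ_clique_boxes k d v t = circ_clique_interval k d (cw_dist k (min (Suc t * d) k) v)"

lemma ex_cut_after:
  assumes "0 < d" "a < k" "k \<le> n * d"
  shows "\<exists>t<n. min (Suc t * d) k - d \<le> a \<and> a < min (Suc t * d) k"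
proof -
  define t where "t = a div d"
  have t: "t * d \<le> a" "a < Suc t * d"
    unfolding t_def using assms(1) by (simp_all add: dividend_less_div_times)
  with assms(2,3) have "t < n"
    by (metis le_less_trans less_le_trans mult_less_cancel2)
  with t assms(2) show ?thesis by auto
qed

lemma circ_clique_boxes_separate:
  assumes "0 < d" "k \<le> n * d" "u < k" "v < k" "0 < cw_dist k u v" "cw_dist k u v < d"
  shows "\<exists>t<n. \<not> intervals_meet (circ_clique_boxes k d u t) (circ_clique_boxes k d v t)"
proof -
  obtain t where t: "t < n" and cut: "min (Suc t * d) k - d \<le> u" "u < min (Suc t * d) k"
    using ex_cut_after assms(1-3) by blast
  define c where "c = min (Suc t * d) k"
  have "c \<le> k" unfolding c_def by simp
  have "k - d \<le> cw_dist k c u"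
    using cut unfolding c_def cw_dist_def by auto
  moreover have "cw_dist k (cw_dist k c u) (cw_dist k c v) = cw_dist k u v"
    using assms(3,4) \<open>c \<le> k\<close> by (rule cw_dist_rotate)
  ultimately have "\<not> intervals_meet (circ_clique_boxes k d u t) (circ_clique_boxes k d v t)"
    unfolding circ_clique_boxes_def c_def[symmetric]
    using assms(3-6) by (intro circ_clique_interval_disjoint) (simp_all add: cw_dist_less)
  with t show ?thesis by blast
qed

lemma circ_clique_box_representation:
  assumes "0 < d" "k \<le> n * d"
  shows "box_representation {..<k} (circ_clique_adj k d) n (circ_clique_boxes k d)"
  unfolding box_representation_def intervals_meet_def[symmetric]
proof (intro conjI ballI allI impI)
  fix v t
  show "fst (circ_clique_boxes k d v t) \<le> snd (circ_clique_boxes k d v t)"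
    unfolding circ_clique_boxes_def circ_clique_interval_def by auto
next
  fix u v assume uv: "u \<in> {..<k}" "v \<in> {..<k}" "u \<noteq> v"
  show "circ_clique_adj k d u v \<longleftrightarrow>
      (\<forall>t<n. intervals_meet (circ_clique_boxes k d u t) (circ_clique_boxes k d v t))"
  proof
    assume "circ_clique_adj k d u v"
    then show "\<forall>t<n. intervals_meet (circ_clique_boxes k d u t) (circ_clique_boxes k d v t)"
      using uv unfolding circ_clique_boxes_def
      by (auto intro!: circ_clique_interval_meet simp: circ_clique_adj_rotate cw_dist_less)
  next
    assume meet: "\<forall>t<n. intervals_meet (circ_clique_boxes k d u t) (circ_clique_boxes k d v t)"
    show "circ_clique_adj k d u v"
    proof (rule ccontr)
      assume "\<not> circ_clique_adj k d u v"
      with uv have "cw_dist k u v < d \<or> cw_dist k v u < d"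
        by (auto simp: circ_clique_adj_iff_cw_dist)
      moreover have "0 < cw_dist k u v" "0 < cw_dist k v u"
        using uv cw_dist_eq_0_iff by auto
      ultimately obtain t where "t < n"
        "\<not> intervals_meet (circ_clique_boxes k d u t) (circ_clique_boxes k d v t)"
        using circ_clique_boxes_separate[OF assms] uv intervals_meet_commute by blast
      with meet show False by blast
    qed
  qed
qed

theorem theorem2p2:
  fixes k d :: nat
  assumes "d > 0" and "k \<ge> 2 * d"
  shows "chromatic_number (circ_clique_vertices k) (circ_clique_adj k d)
           \<ge> boxicity (circ_clique_vertices k) (circ_clique_adj k d)"
proof -
  let ?\<chi> = "chromatic_number (circ_clique_vertices k) (circ_clique_adj k d)"
  have "k \<le> ?\<chi> * d"
    using assms by (rule circ_clique_card_le_chromatic_number_mult)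
  moreover from this assms have "1 \<le> ?\<chi>"
    by (cases ?\<chi>) auto
  ultimately show ?thesis
    using boxicity_le circ_clique_box_representation assms(1)
    unfolding circ_clique_vertices_def by blast
qed

end
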